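(* Let $G=(V,E)$ be a finite signed undirected graph with $V=\{1,\dots,n\}$, $E=E^+\sqcup E^-$, such that the positive subgraph $G^+=(V,E^+)$ is connected and the negative edge set $E^-$ is nonempty. For $\alpha,\beta\ge 0$ consider the dynamics on $x(t)=(x_1(t),\dots,x_n(t))^\top\in\mathbb{R}^n$, $t=0,1,2,\dots$, $$x_i(t+1)=x_i(t)+\alpha\sum_{j\in N_i^+}\big(x_j(t)-x_i(t)\big)-\beta\sum_{j\in N_i^-}\big(x_j(t)-x_i(t)\big),\qquad i\in V.$$ Then for every $\alpha$ with $0<\alpha<1/\max_{i\in V}\deg_i^+$ there exists a critical value $\beta_*\ge 0$ such that: (i) if $\beta<\beta_*$, then $\lim_{t\to\infty}x_i(t)=\frac1n\sum_{j=1}^n x_j(0)$ for every $i\in V$ and every initial value $x(0)\in\mathbb{R}^n$; (ii) if $\beta>\beta_*$, then $\lim_{t\to\infty}\|x(t)\|=\infty$ for Lebesgue-almost every initial value $x(0)\in\mathbb{R}^n$.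
   Context: A signed graph is an undirected simple graph whose edge set is partitioned into positive edges $E^+$ and negative edges $E^-$. For a node $i$, $N_i^+=\{j:\{i,j\}\in E^+\}$ and $N_i^-=\{j:\{i,j\}\in E^-\}$ are its positive and negative neighbor sets, and $\deg_i^+=|N_i^+|$ is its positive degree. *)

theory Defs
  imports "HOL-Analysis.Analysis"
begin

definition signed_graph :: "('n \<Rightarrow> 'n \<Rightarrow> bool) \<Rightarrow> ('n \<Rightarrow> 'n \<Rightarrow> bool) \<Rightarrow> bool" where
  "signed_graph Ep En \<longleftrightarrow>
     (\<forall>i j. Ep i j \<longrightarrow> Ep j i) \<and> (\<forall>i j. En i j \<longrightarrow> En j i) \<and>
     (\<forall>i. \<not> Ep i i) \<and> (\<forall>i. \<not> En i i) \<and> (\<forall>i j. \<not> (Ep i j \<and> En i j))"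

definition nbrs :: "('n \<Rightarrow> 'n \<Rightarrow> bool) \<Rightarrow> 'n \<Rightarrow> 'n set" where
  "nbrs E i = {j. E i j}"

definition pos_deg :: "('n \<Rightarrow> 'n \<Rightarrow> bool) \<Rightarrow> 'n \<Rightarrow> nat" where
  "pos_deg Ep i = card (nbrs Ep i)"

definition max_pos_deg :: "('n::finite \<Rightarrow> 'n \<Rightarrow> bool) \<Rightarrow> nat" where
  "max_pos_deg Ep = Max (range (pos_deg Ep))"

definition connected_graph :: "('n \<Rightarrow> 'n \<Rightarrow> bool) \<Rightarrow> bool" where
  "connected_graph E \<longleftrightarrow> (\<forall>i j. E\<^sup>*\<^sup>* i j)"

definition sstep :: "real \<Rightarrow> real \<Rightarrow> ('n::finite \<Rightarrow> 'n \<Rightarrow> bool) \<Rightarrow> ('n \<Rightarrow> 'n \<Rightarrow> bool)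
     \<Rightarrow> real^'n \<Rightarrow> real^'n" where
  "sstep \<alpha> \<beta> Ep En x = (\<chi> i. x$i + \<alpha> * (\<Sum>j\<in>nbrs Ep i. x$j - x$i)
                                   - \<beta> * (\<Sum>j\<in>nbrs En i. x$j - x$i))"

definition traj :: "real \<Rightarrow> real \<Rightarrow> ('n::finite \<Rightarrow> 'n \<Rightarrow> bool) \<Rightarrow> ('n \<Rightarrow> 'n \<Rightarrow> bool)
     \<Rightarrow> real^'n \<Rightarrow> nat \<Rightarrow> real^'n" where
  "traj \<alpha> \<beta> Ep En x0 t = (sstep \<alpha> \<beta> Ep En ^^ t) x0"

end

theory Submission
  imports Defs
begin

text \<open>The step map is \<open>I - \<alpha> L\<^sup>+ + \<beta> L\<^sup>-\<close> with both Laplacians symmetric, so it is a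
self-adjoint linear map fixing the all-ones vector \<open>1\<close>, and its quadratic form on the
disagreement space \<open>1\<^sup>\<bottom>\<close> is affine and nondecreasing in \<open>\<beta>\<close>. Let \<open>\<beta>\<^sub>*\<close> be the supremum of
those \<open>\<beta> \<ge> 0\<close> for which this form is at most \<open>\<parallel>v\<parallel>\<^sup>2\<close> on \<open>1\<^sup>\<bottom>\<close>; the set is bounded
because a negative edge makes the form grow linearly in \<open>\<beta>\<close>. Below \<open>\<beta>\<^sub>*\<close> the form is a
convex combination of its values at \<open>0\<close> (where connectivity of \<open>G\<^sup>+\<close> gives a uniform gap
below \<open>1\<close>) and at a larger admissible gain, and it stays above \<open>-1\<close> since
\<open>\<alpha> max deg\<^sup>+ < 1\<close>; so the map contracts \<open>1\<^sup>\<bottom>\<close> and the state converges to the average.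
Above \<open>\<beta>\<^sub>*\<close> the form exceeds \<open>\<parallel>v\<parallel>\<^sup>2\<close> somewhere, so the largest eigenvalue exceeds \<open>1\<close>, and
every initial value off the hyperplane orthogonal to its eigenvector blows up.\<close>

text \<open>Every edge is counted in both orientations, so this is \<open>2 x\<^sup>T L y\<close> for the
Laplacian \<open>L\<close> of \<open>E\<close>.\<close>

definition edge_form :: "('n::finite \<Rightarrow> 'n \<Rightarrow> bool) \<Rightarrow> real^'n \<Rightarrow> real^'n \<Rightarrow> real" where
  "edge_form E x y = (\<Sum>i\<in>UNIV. \<Sum>j\<in>UNIV. if E i j then (x$j - x$i) * (y$j - y$i) else 0)"

lemma sum_nbrs_eq_sum_if:
  fixes E :: "'n::finite \<Rightarrow> 'n \<Rightarrow> bool"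
  shows "(\<Sum>j\<in>nbrs E i. g j) = (\<Sum>j\<in>UNIV. if E i j then g j else 0)"
  using sum.inter_filter[of UNIV g "E i"] by (simp add: nbrs_def)

lemma edge_form_commute: "edge_form E x y = edge_form E y x"
  unfolding edge_form_def by (rule sum.cong[OF refl], rule sum.cong[OF refl]) simp

lemma edge_form_self_nonneg: "0 \<le> edge_form E x x"
  unfolding edge_form_def by (intro sum_nonneg) auto

lemma sum_laplacian_mult:
  fixes E :: "'n::finite \<Rightarrow> 'n \<Rightarrow> bool"
  assumes sym: "\<And>i j. E i j \<Longrightarrow> E j i"
  shows "(\<Sum>i\<in>UNIV. (\<Sum>j\<in>nbrs E i. x$j - x$i) * y$i) = - edge_form E x y / 2"
proof -
  let ?A = "\<Sum>i\<in>UNIV. \<Sum>j\<in>UNIV. if E i j then (x$j - x$i) * y$i else 0"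
  let ?B = "\<Sum>i\<in>UNIV. \<Sum>j\<in>UNIV. if E i j then (x$i - x$j) * y$j else 0"
  have lhs: "(\<Sum>i\<in>UNIV. (\<Sum>j\<in>nbrs E i. x$j - x$i) * y$i) = ?A"
    by (simp add: sum_nbrs_eq_sum_if sum_distrib_right)
      (rule sum.cong[OF refl], rule sum.cong[OF refl], simp)
  have "?A = (\<Sum>j\<in>UNIV. \<Sum>i\<in>UNIV. if E i j then (x$j - x$i) * y$i else 0)"
    by (rule sum.swap)
  also have "\<dots> = ?B"
    by (rule sum.cong[OF refl], rule sum.cong[OF refl]) (use sym in \<open>metis\<close>)
  finally have "2 * ?A = ?A + ?B" by simp
  also have "\<dots> = - edge_form E x y"
    unfolding edge_form_def sum_negf[symmetric] sum.distrib[symmetric]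
    by (rule sum.cong[OF refl], rule sum.cong[OF refl]) (simp add: algebra_simps)
  finally show ?thesis using lhs by simp
qed

lemma sstep_inner:
  assumes "signed_graph Ep En"
  shows "sstep a b Ep En x \<bullet> y = x \<bullet> y - a/2 * edge_form Ep x y + b/2 * edge_form En x y"
proof -
  have sp: "\<And>i j. Ep i j \<Longrightarrow> Ep j i" and sn: "\<And>i j. En i j \<Longrightarrow> En j i"
    using assms unfolding signed_graph_def by auto
  have "sstep a b Ep En x \<bullet> y = (\<Sum>i\<in>UNIV. x$i * y$i)
      + a * (\<Sum>i\<in>UNIV. (\<Sum>j\<in>nbrs Ep i. x$j - x$i) * y$i)
      - b * (\<Sum>i\<in>UNIV. (\<Sum>j\<in>nbrs En i. x$j - x$i) * y$i)"
    unfolding sstep_def inner_vec_def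
    by (simp add: algebra_simps sum.distrib sum_subtractf sum_distrib_left)
  then show ?thesis
    using sum_laplacian_mult[OF sp, where x=x and y=y] sum_laplacian_mult[OF sn, where x=x and y=y]
    by (simp add: inner_vec_def)
qed

lemma sstep_quadratic_form:
  assumes "signed_graph Ep En"
  shows "x \<bullet> sstep a b Ep En x = x \<bullet> x - a/2 * edge_form Ep x x + b/2 * edge_form En x x"
  using sstep_inner[OF assms] by (simp add: inner_commute)

lemma sstep_self_adjoint:
  assumes "signed_graph Ep En"
  shows "sstep a b Ep En x \<bullet> y = x \<bullet> sstep a b Ep En y"
  using sstep_inner[OF assms, of a b x y] sstep_inner[OF assms, of a b y x]
  by (simp add: edge_form_commute inner_commute)

lemma linear_sstep: "linear (sstep a b Ep En)"
  by (rule linearI)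
    (simp_all add: sstep_def vec_eq_iff algebra_simps sum.distrib sum_subtractf sum_distrib_left)

lemma sstep_one: "sstep a b Ep En 1 = 1"
  by (simp add: sstep_def vec_eq_iff)

lemma edge_form_self_le_max_pos_deg:
  fixes Ep :: "'n::finite \<Rightarrow> 'n \<Rightarrow> bool"
  assumes sym: "\<And>i j. Ep i j \<Longrightarrow> Ep j i"
  shows "edge_form Ep x x \<le> 4 * real (max_pos_deg Ep) * (x \<bullet> x)"
proof -
  let ?d = "real (max_pos_deg Ep)"
  let ?T = "\<lambda>i j. if Ep i j then 2 * (x$i)^2 else 0"
  have "edge_form Ep x x \<le> (\<Sum>i\<in>UNIV. \<Sum>j\<in>UNIV. ?T i j + ?T j i)"
    unfolding edge_form_def
  proof (intro sum_mono)
    fix i j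
    have "(x$j - x$i) * (x$j - x$i) \<le> 2 * (x$i)^2 + 2 * (x$j)^2"
      using sum_squares_ge_zero[of "x$i + x$j" 0] by (simp add: power2_eq_square algebra_simps)
    then show "(if Ep i j then (x$j - x$i) * (x$j - x$i) else 0) \<le> ?T i j + ?T j i"
      using sym[of i j] by auto
  qed
  also have "\<dots> = 2 * (\<Sum>i\<in>UNIV. \<Sum>j\<in>UNIV. ?T i j)"
    by (simp add: sum.distrib sum.swap[of "\<lambda>i j. ?T j i"])
  also have "\<dots> = 2 * (\<Sum>i\<in>UNIV. 2 * (x$i)^2 * real (pos_deg Ep i))"
  proof -
    have "(\<Sum>j\<in>UNIV. ?T i j) = 2 * (x$i)^2 * real (pos_deg Ep i)" for i
      using sum_nbrs_eq_sum_if[where E=Ep and i=i and g="\<lambda>_. 2 * (x$i)^2"]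
      by (simp add: pos_deg_def ac_simps)
    then show ?thesis by simp
  qed
  also have "\<dots> \<le> 2 * (\<Sum>i\<in>UNIV. 2 * (x$i)^2 * ?d)"
    unfolding max_pos_deg_def by (intro mult_left_mono sum_mono) auto
  also have "\<dots> = 4 * ?d * (x \<bullet> x)"
    by (simp add: inner_vec_def sum_distrib_left sum_distrib_right power2_eq_square algebra_simps)
  finally show ?thesis .
qed

lemma edge_sq_le_edge_form:
  fixes E :: "'n::finite \<Rightarrow> 'n \<Rightarrow> bool"
  assumes "E i j"
  shows "(x$j - x$i)^2 \<le> edge_form E x x"
proof -
  let ?row = "\<lambda>i. \<Sum>j\<in>UNIV. if E i j then (x$j - x$i) * (x$j - x$i) else 0"
  have "(x$j - x$i)^2 \<le> ?row i"
    using member_le_sum[of j UNIV "\<lambda>j. if E i j then (x$j - x$i) * (x$j - x$i) else 0"] assms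
    by (simp add: power2_eq_square)
  also have "\<dots> \<le> edge_form E x x"
    unfolding edge_form_def by (rule member_le_sum) (auto intro: sum_nonneg)
  finally show ?thesis .
qed

lemma reachable_diff_le_edge_form:
  fixes E :: "'n::finite \<Rightarrow> 'n \<Rightarrow> bool"
  assumes "E\<^sup>*\<^sup>* i j"
  shows "\<exists>k. \<forall>x. \<bar>x$i - x$j\<bar> \<le> k * sqrt (edge_form E x x)"
  using assms
proof (induction rule: rtranclp_induct)
  case base
  show ?case by (intro exI[of _ 0]) simp
next
  case (step m j)
  then obtain k where k: "\<And>x. \<bar>x$i - x$m\<bar> \<le> k * sqrt (edge_form E x x)" by blast
  have "\<bar>x$i - x$j\<bar> \<le> (k + 1) * sqrt (edge_form E x x)" for x
  proof -
    have "\<bar>x$j - x$m\<bar> \<le> sqrt (edge_form E x x)"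
      using real_sqrt_le_mono[OF edge_sq_le_edge_form[where E=E and i=m and j=j and x=x, OF step(2)]] by simp
    then show ?thesis using k[of x] by (simp add: algebra_simps)
  qed
  then show ?case by blast
qed

lemma inner_self_le_of_zero_sum:
  fixes x :: "real^'n"
  assumes sum0: "x \<bullet> 1 = 0" and diff: "\<And>i j. \<bar>x$i - x$j\<bar> \<le> D"
  shows "x \<bullet> x \<le> real CARD('n) * D^2"
proof -
  define n where "n = real CARD('n)"
  have n0: "n > 0" unfolding n_def by simp
  have "(x$i)^2 \<le> D^2" for i
  proof -
    have "n * x$i = (\<Sum>j\<in>UNIV. x$i - x$j)"
      using sum0 by (simp add: inner_vec_def sum_subtractf n_def)
    then have "n * \<bar>x$i\<bar> \<le> (\<Sum>j\<in>UNIV. \<bar>x$i - x$j\<bar>)"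
      using n0 by (metis abs_mult abs_of_pos sum_abs)
    also have "\<dots> \<le> n * D"
      using sum_mono[of UNIV "\<lambda>j. \<bar>x$i - x$j\<bar>" "\<lambda>_. D", OF diff] by (simp add: n_def)
    finally have "\<bar>x$i\<bar> \<le> D" using n0 by simp
    then show ?thesis using abs_le_square_iff by fastforce
  qed
  then show ?thesis
    using sum_mono[of UNIV "\<lambda>i. (x$i)^2" "\<lambda>_. D^2"]
    by (simp add: inner_vec_def power2_eq_square n_def)
qed

lemma connected_edge_form_coercive:
  fixes Ep :: "'n::finite \<Rightarrow> 'n \<Rightarrow> bool"
  assumes "connected_graph Ep"
  obtains \<kappa> where "\<kappa> > 0" and "\<And>x. x \<bullet> 1 = 0 \<Longrightarrow> \<kappa> * (x \<bullet> x) \<le> edge_form Ep x x"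
proof -
  obtain k where k: "\<And>i j x. \<bar>x$i - x$j\<bar> \<le> k i j * sqrt (edge_form Ep x x)"
    using reachable_diff_le_edge_form assms unfolding connected_graph_def by metis
  define K where "K = (\<Sum>i\<in>UNIV. \<Sum>j\<in>UNIV. \<bar>k i j\<bar>)"
  have kK: "\<bar>k i j\<bar> \<le> K" for i j
    unfolding K_def
    using member_le_sum[of j UNIV "\<lambda>j. \<bar>k i j\<bar>"]
      member_le_sum[of i UNIV "\<lambda>i. \<Sum>j\<in>UNIV. \<bar>k i j\<bar>"]
    by (simp add: sum_nonneg)
  have diff: "\<bar>x$i - x$j\<bar> \<le> K * sqrt (edge_form Ep x x)" for x i j
    using k[of x i j] mult_right_mono[OF order_trans[OF abs_ge_self kK[of i j]], of "sqrt (edge_form Ep x x)"]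
    by (simp add: edge_form_self_nonneg)
  define C where "C = real CARD('n) * K^2 + 1"
  have C0: "C > 0" unfolding C_def by (intro add_nonneg_pos) simp_all
  show ?thesis
  proof
    show "1 / C > 0" using C0 by simp
    fix x :: "real^'n"
    assume "x \<bullet> 1 = 0"
    then have "x \<bullet> x \<le> real CARD('n) * (K * sqrt (edge_form Ep x x))^2"
      using diff by (rule inner_self_le_of_zero_sum)
    then have "x \<bullet> x \<le> C * edge_form Ep x x"
      using edge_form_self_nonneg[of Ep x] by (simp add: C_def power_mult_distrib algebra_simps)
    then show "1 / C * (x \<bullet> x) \<le> edge_form Ep x x" using C0 by (simp add: field_simps)
  qed
qed

lemma self_adjoint_quadratic_expand:
  fixes f :: "'a::real_inner \<Rightarrow> 'a"
  assumes lin: "linear f" and sa: "\<And>x y. f x \<bullet> y = x \<bullet> f y"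
  shows "(u + s *\<^sub>R w) \<bullet> f (u + s *\<^sub>R w) = u \<bullet> f u + 2 * s * (w \<bullet> f u) + s^2 * (w \<bullet> f w)"
proof -
  have "f (u + s *\<^sub>R w) = f u + s *\<^sub>R f w"
    using lin by (simp add: linear_add linear_scale)
  moreover have "u \<bullet> f w = w \<bullet> f u" using sa[of u w] by (simp add: inner_commute)
  ultimately show ?thesis
    by (simp add: inner_add_left inner_add_right power2_eq_square algebra_simps)
qed

text \<open>Polarization against \<open>w\<close>, the vector \<open>f u\<close> rescaled to the length of \<open>u\<close>.\<close>

lemma self_adjoint_norm_le_on_orthogonal:
  fixes f :: "'a::real_inner \<Rightarrow> 'a"
  assumes lin: "linear f" and sa: "\<And>x y. f x \<bullet> y = x \<bullet> f y"
    and fe: "f e = e" and c0: "c \<ge> 0"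
    and form: "\<And>x. x \<bullet> e = 0 \<Longrightarrow> \<bar>x \<bullet> f x\<bar> \<le> c * (x \<bullet> x)"
    and u: "u \<bullet> e = 0"
  shows "norm (f u) \<le> c * norm u"
proof (cases "f u = 0")
  case True
  then show ?thesis using c0 by simp
next
  case False
  then have u0: "u \<noteq> 0" using lin linear_0 by metis
  define w where "w = (norm u / norm (f u)) *\<^sub>R f u"
  have we: "w \<bullet> e = 0" unfolding w_def using sa[of u e] fe u by simp
  have nw: "norm w = norm u" unfolding w_def using False by simp
  have wfu: "w \<bullet> f u = norm u * norm (f u)"
    unfolding w_def using False by (simp add: power2_norm_eq_inner[symmetric] power2_eq_square)
  have plus: "\<bar>u \<bullet> f u + 2 * (w \<bullet> f u) + w \<bullet> f w\<bar> \<le> c * ((u + w) \<bullet> (u + w))"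
    using form[of "u + 1 *\<^sub>R w"] self_adjoint_quadratic_expand[OF lin sa, of u 1 w] u we
    by (simp add: inner_add_left)
  have minus: "\<bar>u \<bullet> f u - 2 * (w \<bullet> f u) + w \<bullet> f w\<bar> \<le> c * ((u - w) \<bullet> (u - w))"
    using form[of "u + (-1) *\<^sub>R w"] self_adjoint_quadratic_expand[OF lin sa, of u "-1" w] u we
    by (simp add: inner_diff_left)
  have "(u + w) \<bullet> (u + w) + (u - w) \<bullet> (u - w) = 2 * (u \<bullet> u) + 2 * (w \<bullet> w)"
    by (simp add: inner_add_left inner_add_right inner_diff_left inner_diff_right inner_commute)
  also have "\<dots> = 4 * (norm u)^2" using nw by (simp add: power2_norm_eq_inner[symmetric])
  finally have "4 * (w \<bullet> f u) \<le> c * (4 * (norm u)^2)"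
    using plus minus by (simp add: abs_le_iff) (smt (verit) distrib_left)
  then have "norm u * norm (f u) \<le> norm u * (c * norm u)"
    using wfu by (simp add: power2_eq_square mult.assoc mult.left_commute)
  then show ?thesis using u0 by simp
qed

lemma self_adjoint_funpow_inner_eigenvector:
  fixes f :: "'a::real_inner \<Rightarrow> 'a"
  assumes sa: "\<And>x y. f x \<bullet> y = x \<bullet> f y" and fu: "f u = l *\<^sub>R u"
  shows "(f ^^ t) x \<bullet> u = l^t * (x \<bullet> u)"
proof (induction t)
  case 0
  show ?case by simp
next
  case (Suc t)
  have "(f ^^ Suc t) x \<bullet> u = (f ^^ t) x \<bullet> f u" using sa by simp
  then show ?case using Suc fu by simp
qed

lemma linear_funpow_fixed_add:
  fixes f :: "'a::real_vector \<Rightarrow> 'a"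
  assumes lin: "linear f" and fe: "f e = e"
  shows "(f ^^ t) (p *\<^sub>R e + y) = p *\<^sub>R e + (f ^^ t) y"
  by (induction t) (simp_all add: linear_add[OF lin] linear_scale[OF lin] fe)

lemma self_adjoint_iterates_tendsto_projection:
  fixes f :: "'a::real_inner \<Rightarrow> 'a"
  assumes lin: "linear f" and sa: "\<And>x y. f x \<bullet> y = x \<bullet> f y"
    and fe: "f e = e" and c1: "c < 1"
    and form: "\<And>x. x \<bullet> e = 0 \<Longrightarrow> \<bar>x \<bullet> f x\<bar> \<le> c * (x \<bullet> x)"
  shows "(\<lambda>t. (f ^^ t) x) \<longlonglongrightarrow> ((x \<bullet> e) / (e \<bullet> e)) *\<^sub>R e"
proof -
  define c' where "c' = max c 0"
  define p where "p = (x \<bullet> e) / (e \<bullet> e)"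
  define y where "y = x - p *\<^sub>R e"
  have ye: "y \<bullet> e = 0"
    unfolding y_def p_def by (cases "e = 0") (simp_all add: inner_diff_left)
  have form': "\<bar>z \<bullet> f z\<bar> \<le> c' * (z \<bullet> z)" if "z \<bullet> e = 0" for z
    using form[OF that] mult_right_mono[of c c' "z \<bullet> z"] by (simp add: c'_def)
  have orth: "(f ^^ t) y \<bullet> e = 0" for t
    using self_adjoint_funpow_inner_eigenvector[OF sa, of e 1 t y] fe ye by simp
  have decay: "norm ((f ^^ t) y) \<le> c'^t * norm y" for t
  proof (induction t)
    case 0
    show ?case by simp
  next
    case (Suc t)
    have "norm ((f ^^ Suc t) y) \<le> c' * norm ((f ^^ t) y)"
      using self_adjoint_norm_le_on_orthogonal[OF lin sa fe _ form' orth] by (simp add: c'_def)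
    also have "\<dots> \<le> c' * (c'^t * norm y)"
      using Suc by (intro mult_left_mono) (simp_all add: c'_def)
    finally show ?case by simp
  qed
  have "(\<lambda>t. c'^t * norm y) \<longlonglongrightarrow> 0"
    by (rule tendsto_mult_left_zero[OF LIMSEQ_power_zero]) (use c1 in \<open>simp add: c'_def\<close>)
  then have "(\<lambda>t. (f ^^ t) y) \<longlonglongrightarrow> 0"
    by (rule Lim_null_comparison[rotated]) (simp add: decay)
  then have "(\<lambda>t. p *\<^sub>R e + (f ^^ t) y) \<longlonglongrightarrow> p *\<^sub>R e + 0"
    by (intro tendsto_add tendsto_const)
  moreover have "(f ^^ t) x = p *\<^sub>R e + (f ^^ t) y" for t
    using linear_funpow_fixed_add[OF lin fe, of t p y] by (simp add: y_def)
  ultimately show ?thesis by (simp add: p_def)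
qed

lemma linear_rayleigh_quotient_attains_max:
  fixes f :: "'a::euclidean_space \<Rightarrow> 'a"
  assumes lin: "linear f"
  obtains u l where "u \<noteq> 0" and "u \<bullet> f u = l * (u \<bullet> u)" and "\<And>y. y \<bullet> f y \<le> l * (y \<bullet> y)"
proof -
  let ?g = "\<lambda>y. y \<bullet> f y"
  have "continuous_on (sphere 0 1) f"
    using lin by (intro linear_continuous_on) (simp add: linear_conv_bounded_linear)
  then have "continuous_on (sphere 0 1) ?g" by (intro continuous_intros)
  then obtain u where u: "u \<in> sphere 0 1" and umax: "\<And>y. y \<in> sphere 0 1 \<Longrightarrow> ?g y \<le> ?g u"
    using continuous_attains_sup[OF compact_sphere _ \<open>continuous_on (sphere 0 1) ?g\<close>] by auto
  have uu: "u \<bullet> u = 1" using u by (simp add: power2_norm_eq_inner[symmetric])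
  have "?g y \<le> ?g u * (y \<bullet> y)" for y
  proof (cases "y = 0")
    case True
    then show ?thesis using lin by (simp add: linear_0)
  next
    case False
    have "?g ((1 / norm y) *\<^sub>R y) \<le> ?g u" using False by (intro umax) simp
    moreover have "?g ((1 / norm y) *\<^sub>R y) = ?g y / (norm y)^2"
      using lin by (simp add: linear_scale power2_eq_square)
    ultimately have "?g y / (norm y)^2 \<le> ?g u" by simp
    then have "?g y \<le> ?g u * (norm y)^2" using False by (simp add: divide_le_eq)
    then show ?thesis by (simp add: power2_norm_eq_inner)
  qed
  moreover have "u \<noteq> 0" using u by auto
  ultimately show ?thesis using that uu by simp
qed

text \<open>The form of \<open>l - f\<close> is positive semidefinite and vanishes at \<open>u\<close>, so moving \<open>u\<close> in
the direction \<open>w = f u - l u\<close> changes it by \<open>-2 s \<parallel>w\<parallel>\<^sup>2 + O(s\<^sup>2)\<close>, which forces \<open>w = 0\<close>.\<close>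

lemma self_adjoint_rayleigh_max_eigenvector:
  fixes f :: "'a::real_inner \<Rightarrow> 'a"
  assumes lin: "linear f" and sa: "\<And>x y. f x \<bullet> y = x \<bullet> f y"
    and max: "\<And>y. y \<bullet> f y \<le> l * (y \<bullet> y)" and eq: "u \<bullet> f u = l * (u \<bullet> u)"
  shows "f u = l *\<^sub>R u"
proof -
  define w where "w = f u - l *\<^sub>R u"
  define K where "K = l * (w \<bullet> w) - w \<bullet> f w"
  have K0: "K \<ge> 0" using max[of w] by (simp add: K_def)
  have first_order: "2 * s * (w \<bullet> w) \<le> s^2 * K" for s
  proof -
    have "w \<bullet> f u = w \<bullet> w + l * (w \<bullet> u)"
      by (simp add: w_def inner_diff_left inner_diff_right inner_commute algebra_simps)
    moreover have "(u + s *\<^sub>R w) \<bullet> (u + s *\<^sub>R w) = u \<bullet> u + 2 * s * (w \<bullet> u) + s^2 * (w \<bullet> w)"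
      by (simp add: inner_add_left inner_add_right inner_commute power2_eq_square)
    ultimately show ?thesis
      using max[of "u + s *\<^sub>R w"] self_adjoint_quadratic_expand[OF lin sa, of u s w] eq
      by (simp add: K_def algebra_simps)
  qed
  have "2 * (w \<bullet> w) \<le> 0 + \<epsilon>" if "\<epsilon> > 0" for \<epsilon>
  proof -
    define s where "s = \<epsilon> / (K + 1)"
    have s0: "s > 0" using that K0 by (simp add: s_def)
    have "s * K \<le> \<epsilon>" using that K0 by (simp add: s_def field_simps)
    moreover have "s * (2 * (w \<bullet> w)) \<le> s * (s * K)"
      using first_order[of s] by (simp add: power2_eq_square algebra_simps)
    ultimately show ?thesis using s0 by (simp add: mult_le_cancel_left_pos)
  qed
  then have "w \<bullet> w \<le> 0" using field_le_epsilon[of "2 * (w \<bullet> w)" 0] by simp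
  then have "w = 0" by (metis inner_gt_zero_iff not_le)
  then show ?thesis by (simp add: w_def)
qed

lemma self_adjoint_iterates_diverge:
  fixes f :: "'a::real_inner \<Rightarrow> 'a"
  assumes sa: "\<And>x y. f x \<bullet> y = x \<bullet> f y" and fu: "f u = l *\<^sub>R u"
    and l1: "l > 1" and xu: "x \<bullet> u \<noteq> 0"
  shows "filterlim (\<lambda>t. norm ((f ^^ t) x)) at_top sequentially"
proof -
  have u0: "u \<noteq> 0" using xu by auto
  have bound: "l^t * (\<bar>x \<bullet> u\<bar> / norm u) \<le> norm ((f ^^ t) x)" for t
  proof -
    have "l^t * \<bar>x \<bullet> u\<bar> = \<bar>(f ^^ t) x \<bullet> u\<bar>"
      using self_adjoint_funpow_inner_eigenvector[OF sa fu] l1 by (simp add: abs_mult)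
    also have "\<dots> \<le> norm ((f ^^ t) x) * norm u" by (rule Cauchy_Schwarz_ineq2)
    finally show ?thesis using u0 by (simp add: field_simps)
  qed
  have "filterlim (\<lambda>t. l^t) at_top sequentially"
    using l1 by (simp add: Archimedean_eventually_pow filterlim_at_top_dense)
  then have "filterlim (\<lambda>t. l^t * (\<bar>x \<bullet> u\<bar> / norm u)) at_top sequentially"
    using xu u0 by (intro filterlim_at_top_mult_tendsto_pos[OF tendsto_const]) simp_all
  then show ?thesis by (rule filterlim_at_top_mono) (intro always_eventually allI bound)
qed

lemma AE_inner_nonzero:
  fixes u :: "'a::euclidean_space"
  assumes "u \<noteq> 0"
  shows "AE x in lborel. u \<bullet> x \<noteq> 0"
proof (rule AE_I')
  have "negligible {x. u \<bullet> x = 0}" using negligible_hyperplane[of u 0] assms by simp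
  moreover have "{x. u \<bullet> x = 0} \<in> sets lborel"
    using closed_hyperplane[of u 0] by (simp add: borel_closed)
  ultimately show "{x. u \<bullet> x = 0} \<in> null_sets lborel"
    by (simp add: negligible_iff_null_sets null_sets_completion_iff)
qed auto

definition nonexpansive_gains :: "real \<Rightarrow> ('n::finite \<Rightarrow> 'n \<Rightarrow> bool) \<Rightarrow> ('n \<Rightarrow> 'n \<Rightarrow> bool) \<Rightarrow> real set"
  where "nonexpansive_gains \<alpha> Ep En =
    {\<beta>. 0 \<le> \<beta> \<and> (\<forall>v::real^'n. v \<bullet> 1 = 0 \<longrightarrow> v \<bullet> sstep \<alpha> \<beta> Ep En v \<le> v \<bullet> v)}"

lemma zero_mem_nonexpansive_gains:
  fixes Ep En :: "'n::finite \<Rightarrow> 'n \<Rightarrow> bool"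
  assumes "signed_graph Ep En" and "0 \<le> \<alpha>"
  shows "0 \<in> nonexpansive_gains \<alpha> Ep En"
  unfolding nonexpansive_gains_def
proof (intro CollectI conjI allI impI order_refl)
  fix v :: "real^'n"
  show "v \<bullet> sstep \<alpha> 0 Ep En v \<le> v \<bullet> v"
    using sstep_quadratic_form[OF assms(1), of v \<alpha> 0]
      mult_nonneg_nonneg[OF assms(2) edge_form_self_nonneg[of Ep v]]
    by simp
qed

lemma bdd_above_nonexpansive_gains:
  fixes Ep En :: "'n::finite \<Rightarrow> 'n \<Rightarrow> bool"
  assumes sg: "signed_graph Ep En" and ab: "En a b"
  shows "bdd_above (nonexpansive_gains \<alpha> Ep En)"
proof -
  have "a \<noteq> b" using sg ab unfolding signed_graph_def by blast
  define v :: "real^'n" where "v = axis a 1 - axis b 1"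
  have v1: "v \<bullet> 1 = 0" unfolding v_def by (simp add: inner_diff_left inner_axis')
  have "(v$b - v$a)^2 = 4" using \<open>a \<noteq> b\<close> by (simp add: v_def axis_def)
  then have N: "4 \<le> edge_form En v v" using edge_sq_le_edge_form[of En a b v] ab by simp
  have "\<beta> \<le> \<alpha> * edge_form Ep v v / 4" if "\<beta> \<in> nonexpansive_gains \<alpha> Ep En" for \<beta>
  proof -
    have "\<beta> \<ge> 0" and "v \<bullet> sstep \<alpha> \<beta> Ep En v \<le> v \<bullet> v"
      using that v1 by (auto simp: nonexpansive_gains_def)
    then have "\<beta> * 4 \<le> \<alpha> * edge_form Ep v v"
      using mult_left_mono[OF N, of \<beta>] sstep_quadratic_form[OF sg, of v \<alpha> \<beta>] by simp
    then show ?thesis by simp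
  qed
  then show ?thesis by (rule bdd_aboveI)
qed

lemma sstep_quadratic_form_lower_bound:
  assumes sg: "signed_graph Ep En" and \<alpha>0: "0 \<le> \<alpha>" and \<beta>0: "0 \<le> \<beta>"
  shows "(1 - 2 * \<alpha> * real (max_pos_deg Ep)) * (x \<bullet> x) \<le> x \<bullet> sstep \<alpha> \<beta> Ep En x"
proof -
  let ?d = "real (max_pos_deg Ep)"
  have "\<alpha> / 2 * edge_form Ep x x \<le> \<alpha> / 2 * (4 * ?d * (x \<bullet> x))"
    using edge_form_self_le_max_pos_deg[of Ep x] sg \<alpha>0 unfolding signed_graph_def
    by (intro mult_left_mono) auto
  moreover have "0 \<le> \<beta> / 2 * edge_form En x x" using \<beta>0 edge_form_self_nonneg[of En x] by simp
  ultimately have "x \<bullet> x - \<alpha> / 2 * (4 * ?d * (x \<bullet> x))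
      \<le> x \<bullet> x - \<alpha> / 2 * edge_form Ep x x + \<beta> / 2 * edge_form En x x"
    by linarith
  then show ?thesis by (simp add: sstep_quadratic_form[OF sg] algebra_simps)
qed

text \<open>The quadratic form \<open>Q\<^sub>\<beta>\<close> of the step map is affine in \<open>\<beta>\<close>, so for \<open>\<beta> = t \<beta>'\<close> it is
the convex combination \<open>(1 - t) Q\<^sub>0 + t Q\<^sub>\<beta>\<^sub>'\<close>, where \<open>Q\<^sub>0 \<le> 1 - \<alpha> \<kappa> / 2\<close> and \<open>Q\<^sub>\<beta>\<^sub>' \<le> 1\<close>
on unit vectors orthogonal to \<open>1\<close>.\<close>

lemma sstep_quadratic_form_below_nonexpansive_gain:
  fixes Ep En :: "'n::finite \<Rightarrow> 'n \<Rightarrow> bool"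
  assumes sg: "signed_graph Ep En" and \<kappa>: "\<kappa> * (x \<bullet> x) \<le> edge_form Ep x x" and x1: "x \<bullet> 1 = 0"
    and \<alpha>0: "0 \<le> \<alpha>" and \<beta>': "\<beta>' \<in> nonexpansive_gains \<alpha> Ep En" and \<beta>0: "0 \<le> \<beta>" and \<beta>\<beta>': "\<beta> < \<beta>'"
  shows "x \<bullet> sstep \<alpha> \<beta> Ep En x \<le> (1 - (1 - \<beta> / \<beta>') * (\<alpha> * \<kappa> / 2)) * (x \<bullet> x)"
proof -
  let ?P = "edge_form Ep x x" and ?N = "edge_form En x x"
  define t where "t = \<beta> / \<beta>'"
  have t: "0 \<le> t" "t < 1" using \<beta>0 \<beta>\<beta>' by (simp_all add: t_def)
  have "x \<bullet> sstep \<alpha> \<beta>' Ep En x \<le> x \<bullet> x" using \<beta>' x1 by (simp add: nonexpansive_gains_def)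
  then have "\<beta>' * ?N \<le> \<alpha> * ?P" using sstep_quadratic_form[OF sg, of x \<alpha> \<beta>'] by simp
  then have N: "\<beta> / 2 * ?N \<le> t * (\<alpha> * ?P) / 2"
    using mult_left_mono[of "\<beta>' * ?N" "\<alpha> * ?P" t] t \<beta>\<beta>' \<beta>0 by (simp add: t_def)
  have P: "(1 - t) * (\<alpha> / 2) * (\<kappa> * (x \<bullet> x)) \<le> (1 - t) * (\<alpha> / 2) * ?P"
    using \<kappa> t \<alpha>0 by (intro mult_left_mono) simp_all
  have "x \<bullet> sstep \<alpha> \<beta> Ep En x = x \<bullet> x - \<alpha> / 2 * ?P + \<beta> / 2 * ?N"
    by (rule sstep_quadratic_form[OF sg])
  also have "\<dots> \<le> x \<bullet> x - \<alpha> / 2 * ?P + t * (\<alpha> * ?P) / 2" using N by linarith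
  also have "\<dots> = x \<bullet> x - (1 - t) * (\<alpha> / 2) * ?P" by (simp add: field_simps)
  also have "\<dots> \<le> x \<bullet> x - (1 - t) * (\<alpha> / 2) * (\<kappa> * (x \<bullet> x))" using P by linarith
  also have "\<dots> = (1 - (1 - t) * (\<alpha> * \<kappa> / 2)) * (x \<bullet> x)" by (simp add: algebra_simps)
  finally show ?thesis by (simp only: t_def)
qed

lemma consensus_below_nonexpansive_gain:
  fixes Ep En :: "'n::finite \<Rightarrow> 'n \<Rightarrow> bool"
  assumes sg: "signed_graph Ep En" and conn: "connected_graph Ep"
    and \<alpha>0: "0 < \<alpha>" and \<alpha>d: "\<alpha> * real (max_pos_deg Ep) < 1"
    and \<beta>': "\<beta>' \<in> nonexpansive_gains \<alpha> Ep En" and \<beta>0: "0 \<le> \<beta>" and \<beta>\<beta>': "\<beta> < \<beta>'"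
  shows "(\<lambda>t. traj \<alpha> \<beta> Ep En x0 t $ i) \<longlonglongrightarrow> (\<Sum>j\<in>UNIV. x0 $ j) / real CARD('n)"
proof -
  obtain \<kappa> where \<kappa>0: "\<kappa> > 0" and \<kappa>: "\<And>x. x \<bullet> 1 = 0 \<Longrightarrow> \<kappa> * (x \<bullet> x) \<le> edge_form Ep x x"
    using connected_edge_form_coercive[OF conn] by blast
  let ?f = "sstep \<alpha> \<beta> Ep En"
  define c where "c = max (1 - (1 - \<beta> / \<beta>') * (\<alpha> * \<kappa> / 2)) (2 * \<alpha> * real (max_pos_deg Ep) - 1)"
  have c1: "c < 1" using \<beta>0 \<beta>\<beta>' \<alpha>0 \<kappa>0 \<alpha>d by (simp add: c_def)
  have form: "\<bar>x \<bullet> ?f x\<bar> \<le> c * (x \<bullet> x)" if x1: "x \<bullet> 1 = 0" for x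
  proof -
    have "- c \<le> 1 - 2 * \<alpha> * real (max_pos_deg Ep)" by (simp add: c_def)
    from mult_right_mono[OF this inner_ge_zero[of x]]
    have "- c * (x \<bullet> x) \<le> x \<bullet> ?f x"
      using sstep_quadratic_form_lower_bound[OF sg less_imp_le[OF \<alpha>0] \<beta>0, of x] by linarith
    moreover have "1 - (1 - \<beta> / \<beta>') * (\<alpha> * \<kappa> / 2) \<le> c" by (simp add: c_def)
    from mult_right_mono[OF this inner_ge_zero[of x]]
    have "x \<bullet> ?f x \<le> c * (x \<bullet> x)"
      using sstep_quadratic_form_below_nonexpansive_gain[OF sg \<kappa>[OF x1] x1 less_imp_le[OF \<alpha>0] \<beta>' \<beta>0 \<beta>\<beta>']
      by linarith
    ultimately show ?thesis by (simp add: abs_le_iff)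
  qed
  have "(\<lambda>t. (?f ^^ t) x0) \<longlonglongrightarrow> ((x0 \<bullet> 1) / ((1::real^'n) \<bullet> 1)) *\<^sub>R 1"
    by (rule self_adjoint_iterates_tendsto_projection[OF linear_sstep sstep_self_adjoint[OF sg]
        sstep_one c1 form])
  then have "(\<lambda>t. (?f ^^ t) x0 $ i) \<longlonglongrightarrow> (x0 \<bullet> 1) / ((1::real^'n) \<bullet> 1)"
    by (auto dest: tendsto_vec_nth[where i=i])
  then show ?thesis by (simp add: traj_def inner_vec_def)
qed

lemma divergence_outside_nonexpansive_gains:
  fixes Ep En :: "'n::finite \<Rightarrow> 'n \<Rightarrow> bool"
  assumes sg: "signed_graph Ep En" and \<beta>0: "0 \<le> \<beta>" and \<beta>: "\<beta> \<notin> nonexpansive_gains \<alpha> Ep En"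
  shows "AE x0 in lborel. filterlim (\<lambda>t. norm (traj \<alpha> \<beta> Ep En x0 t)) at_top sequentially"
proof -
  let ?f = "sstep \<alpha> \<beta> Ep En"
  obtain v :: "real^'n" where v: "v \<bullet> v < v \<bullet> ?f v"
    using \<beta> \<beta>0 by (auto simp: nonexpansive_gains_def not_le)
  obtain u l where u0: "u \<noteq> 0" and ul: "u \<bullet> ?f u = l * (u \<bullet> u)"
    and rayleigh: "\<And>y. y \<bullet> ?f y \<le> l * (y \<bullet> y)"
    using linear_rayleigh_quotient_attains_max[OF linear_sstep] by blast
  have fu: "?f u = l *\<^sub>R u"
    by (rule self_adjoint_rayleigh_max_eigenvector[OF linear_sstep sstep_self_adjoint[OF sg] rayleigh ul])
  have "v \<bullet> v < l * (v \<bullet> v)" using v rayleigh[of v] by linarith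
  then have l1: "l > 1"
    by (metis inner_ge_zero mult_less_cancel_right1 not_less order.not_eq_order_implies_strict)
  show ?thesis
    using AE_inner_nonzero[OF u0]
  proof eventually_elim
    case (elim x0)
    then show ?case
      using self_adjoint_iterates_diverge[OF sstep_self_adjoint[OF sg] fu l1]
      by (simp add: traj_def inner_commute)
  qed
qed

theorem theorem4p1:
  fixes Ep En :: "'n::finite \<Rightarrow> 'n \<Rightarrow> bool" and \<alpha> :: real
  assumes "signed_graph Ep En"
    and "connected_graph Ep"
    and "\<exists>i j. En i j"
    and "0 < \<alpha>" and "\<alpha> < 1 / real (max_pos_deg Ep)"
  shows "\<exists>\<beta>s::real. 0 \<le> \<beta>s \<and>
     (\<forall>\<beta>. 0 \<le> \<beta> \<and> \<beta> < \<beta>s \<longrightarrow>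
        (\<forall>x0::real^'n. \<forall>i. (\<lambda>t. traj \<alpha> \<beta> Ep En x0 t $ i)
            \<longlonglongrightarrow> (\<Sum>j\<in>UNIV. x0 $ j) / real CARD('n))) \<and>
     (\<forall>\<beta>. \<beta> > \<beta>s \<longrightarrow>
        (AE x0 in lborel. filterlim (\<lambda>t. norm (traj \<alpha> \<beta> Ep En x0 t)) at_top sequentially))"
proof -
  let ?G = "nonexpansive_gains \<alpha> Ep En"
  have \<alpha>d: "\<alpha> * real (max_pos_deg Ep) < 1"
    using assms(4,5) by (cases "max_pos_deg Ep = 0") (auto simp: field_simps)
  have G0: "0 \<in> ?G" using zero_mem_nonexpansive_gains[OF assms(1) less_imp_le[OF assms(4)]] .
  obtain a b where "En a b" using assms(3) by blast
  then have bdd: "bdd_above ?G" by (rule bdd_above_nonexpansive_gains[OF assms(1)])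
  show ?thesis
  proof (intro exI[of _ "Sup ?G"] conjI allI impI)
    show "0 \<le> Sup ?G" using cSup_upper[OF G0 bdd] .
  next
    fix \<beta> x0 i
    assume "0 \<le> \<beta> \<and> \<beta> < Sup ?G"
    moreover then obtain \<beta>' where "\<beta>' \<in> ?G" and "\<beta> < \<beta>'"
      using less_cSup_iff[OF _ bdd] G0 by blast
    ultimately show "(\<lambda>t. traj \<alpha> \<beta> Ep En x0 t $ i) \<longlonglongrightarrow> (\<Sum>j\<in>UNIV. x0 $ j) / real CARD('n)"
      using consensus_below_nonexpansive_gain assms(1,2,4) \<alpha>d by blast
  next
    fix \<beta>
    assume "\<beta> > Sup ?G"
    then have "\<beta> \<notin> ?G" and "0 \<le> \<beta>" using cSup_upper[OF _ bdd] cSup_upper[OF G0 bdd] by fastforce+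
    then show "AE x0 in lborel. filterlim (\<lambda>t. norm (traj \<alpha> \<beta> Ep En x0 t)) at_top sequentially"
      using divergence_outside_nonexpansive_gains assms(1) by blast
  qed
qed

end
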